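(* There exist constants $\delta>0$ and $N^*>0$ such that for every integer $N>N^*$ there is a pure state $|\Psi\rangle\in\mathbb{S}_N$ satisfying $$\log_2\!\left(\lfloor N/2\rfloor+1\right)-E\big(|\Psi\rangle,\{\lfloor N/2\rfloor,\lceil N/2\rceil\}\big)<\delta .$$
   Context: For an integer $N\ge 1$, consider $N$ spin-1/2 particles (qubits) with Hilbert space $(\mathbb{C}^2)^{\otimes N}$. The symmetric subspace $\mathbb{S}_N\subset(\mathbb{C}^2)^{\otimes N}$ is the set of states invariant under every permutation of the $N$ qubits. It is spanned by the Dicke states $|\tilde m\rangle=\binom{N}{m}^{-1/2}\sum_{\pi}\pi\big(|1\rangle^{\otimes m}\otimes|0\rangle^{\otimes(N-m)}\big)$ for $m=0,\dots,N$, where the sum runs over the $\binom{N}{m}$ distinct arrangements. For a pure state $|\Psi\rangle$ and a bipartition of the qubits into a set $A$ of $k$ qubits and the complementary set $B$ of $N-k$ qubits, the entropy of entanglement is $E(|\Psi\rangle,\{k,N-k\})=S(\rho_A)$, where $\rho_A=\mathrm{Tr}_B|\Psi\rangle\langle\Psi|$ and $S(\rho)=-\mathrm{Tr}(\rho\log_2\rho)$. For symmetric states this quantity does not depend on which $k$ qubits are placed in $A$. *)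

theory Defs
  imports "Jordan_Normal_Form.Matrix" "Jordan_Normal_Form.Char_Poly"
    "HOL-Combinatorics.Permutations" "HOL-Computational_Algebra.Fundamental_Theorem_Algebra"
begin

(* Computational basis of N qubits: basis state |x_0 ... x_{N-1}> is encoded by the
   index i < 2^N with x_j = bit i j.  A state vector is a complex vector of dimension 2^N. *)

definition perm_index :: "(nat \<Rightarrow> nat) \<Rightarrow> nat \<Rightarrow> nat \<Rightarrow> nat" where
  "perm_index p N i = (\<Sum>j<N. if bit i (p j) then 2 ^ j else 0)"

definition pure_state :: "nat \<Rightarrow> complex vec \<Rightarrow> bool" where
  "pure_state N psi \<longleftrightarrow> dim_vec psi = 2 ^ N \<and> (\<Sum>i<2 ^ N. (cmod (psi $ i))\<^sup>2) = 1"

definition symmetric_subspace :: "nat \<Rightarrow> complex vec set" where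
  "symmetric_subspace N = {psi. dim_vec psi = 2 ^ N \<and>
     (\<forall>p. p permutes {..<N} \<longrightarrow> (\<forall>i<2 ^ N. psi $ i = psi $ perm_index p N i))}"

(* reduced density matrix rho_A = Tr_B |psi><psi| with A = the qubits 0..k-1 and
   B = the qubits k..N-1; index i = a + 2^k * b *)
definition reduced_density :: "nat \<Rightarrow> nat \<Rightarrow> complex vec \<Rightarrow> complex mat" where
  "reduced_density N k psi = mat (2 ^ k) (2 ^ k)
     (\<lambda>(a, a'). \<Sum>b<2 ^ (N - k). psi $ (a + 2 ^ k * b) * cnj (psi $ (a' + 2 ^ k * b)))"

(* von Neumann entropy S(rho) = - Tr (rho log2 rho) = - sum over the eigenvalues lambda of rho
   (with algebraic multiplicity) of lambda log2 lambda, with 0 log 0 = 0 *)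
definition vn_entropy :: "complex mat \<Rightarrow> real" where
  "vn_entropy rho = - (\<Sum>lam\<in>#proots (char_poly rho).
      (if Re lam = 0 then 0 else Re lam * log 2 (Re lam)))"

definition ent_entropy :: "nat \<Rightarrow> nat \<Rightarrow> complex vec \<Rightarrow> real" where
  "ent_entropy N k psi = vn_entropy (reduced_density N k psi)"

end

theory Submission
  imports Defs "HOL-Library.Discrete_Functions" "Jordan_Normal_Form.Schur_Decomposition"
begin

(* Let phi_z = (|0> + z|1>) / sqrt (1 + |z|^2).  Since
   |<phi_z|phi_w>|^2 = 1 - |z - w|^2 / ((1 + |z|^2) (1 + |w|^2)),
   for z = (x + iy)/K and w = (x' + iy')/K on the grid with 0 <= x, y < K, the overlap of the
   m-fold tensor powers of phi_z and phi_w is at most exp (-12 (x - x')^2 - 12 (y - y')^2) once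
   m >= 216 K^2.  So on either side of the cut the Gram matrix of these K^2 product states has
   absolute row sums at most (7/6)^2 = 49/36 < 2.  Let Psi be the normalised sum of the N-fold
   powers; it is symmetric.  Diagonal dominance gives Z >= (2 - 49/36) K^2 for the squared norm Z
   of the unnormalised sum, and the Schur test on both halves bounds every eigenvalue of the
   reduced density matrix by (49/36)^2 / Z.  The entropy is at least the min-entropy, hence at least
   log2 K^2 - O(1), while K^2 is chosen of order N, so log2 (N/2 + 1) <= log2 K^2 + O(1). *)

lemma sum_lessThan_add:
  "(\<Sum>i<m + (n::nat). f i) = (\<Sum>i<m. f i) + (\<Sum>i<n. f (m + i))"
  by (induction n) (auto simp: add.assoc)

lemma prod_lessThan_add:
  "(\<Prod>i<m + (n::nat). f i) = (\<Prod>i<m. f i) * (\<Prod>i<n. f (m + i))"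
  by (induction n) (auto simp: mult.assoc)

lemma sum_lessThan_mult:
  "(\<Sum>i<p * (q::nat). f i) = (\<Sum>b<q. \<Sum>a<p. f (a + p * b))"
proof (induction q)
  case (Suc q)
  have "(\<Sum>i<p * Suc q. f i) = (\<Sum>i<p * q + p. f i)"
    by (simp add: add.commute)
  also have "\<dots> = (\<Sum>i<p * q. f i) + (\<Sum>i<p. f (p * q + i))"
    by (rule sum_lessThan_add)
  finally show ?case
    using Suc by (simp add: add.commute)
qed simp

lemma bit_add_two_power_mult:
  fixes a b :: nat
  assumes "a < 2 ^ k"
  shows "bit (a + 2 ^ k * b) j \<longleftrightarrow> (if j < k then bit a j else bit b (j - k))"
proof -
  have a: "take_bit k a = a"
    using assms by (rule take_bit_nat_eq_self)
  have disjoint: "\<not> bit a i \<or> \<not> bit (push_bit k b) i" for i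
    using bit_take_bit_iff[of k a i] a by (auto simp: bit_push_bit_iff_nat)
  have "bit (a + 2 ^ k * b) j \<longleftrightarrow> bit a j \<or> bit (push_bit k b) j"
    unfolding push_bit_nat_def[symmetric] mult.commute[of "2 ^ k"]
    by (rule bit_disjunctive_add_iff[OF disjoint])
  then show ?thesis
    using bit_take_bit_iff[of k a j] a by (auto simp: bit_push_bit_iff_nat)
qed

lemma perm_index_eq_horner_sum:
  "perm_index p N i = horner_sum of_bool 2 (map (\<lambda>j. bit i (p j)) [0..<N])"
  by (simp add: perm_index_def horner_sum_eq_sum atLeast0LessThan sum.inter_restrict)

lemma perm_index_less: "perm_index p N i < 2 ^ N"
  using horner_sum_of_bool_2_less[of "map (\<lambda>j. bit i (p j)) [0..<N]"]
  by (simp add: perm_index_eq_horner_sum)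

lemma bit_perm_index_iff: "bit (perm_index p N i) j \<longleftrightarrow> j < N \<and> bit i (p j)"
  by (auto simp: perm_index_eq_horner_sum bit_horner_sum_bit_iff)

lemma sum_prod_bits:
  "(\<Sum>i<(2::nat) ^ m. \<Prod>j<m. g j (bit i j))
     = (\<Prod>j<m. g j False + g j True :: 'a :: comm_semiring_1)"
proof (induction m)
  case (Suc m)
  let ?P = "\<lambda>a. \<Prod>j<m. g j (bit a j)"
  have split: "(\<Prod>j<Suc m. g j (bit (a + 2 ^ m * b) j)) = ?P a * g m (odd b)"
    if "a < 2 ^ m" for a b :: nat
  proof -
    have "(\<Prod>j<m. g j (bit (a + 2 ^ m * b) j)) = ?P a"
      using that by (intro prod.cong refl) (simp add: bit_add_two_power_mult)
    then show ?thesis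
      using that by (simp add: bit_add_two_power_mult bit_0)
  qed
  have "(\<Sum>i<(2::nat) ^ Suc m. \<Prod>j<Suc m. g j (bit i j))
      = (\<Sum>b<2::nat. \<Sum>a<(2::nat) ^ m. \<Prod>j<Suc m. g j (bit (a + 2 ^ m * b) j))"
    by (simp only: power_Suc mult.commute[of 2] sum_lessThan_mult)
  also have "\<dots> = (\<Sum>b<2::nat. \<Sum>a<(2::nat) ^ m. ?P a * g m (odd b))"
    by (intro sum.cong refl split) simp
  also have "\<dots> = (\<Sum>a<(2::nat) ^ m. ?P a) * g m False + (\<Sum>a<(2::nat) ^ m. ?P a) * g m True"
    by (simp add: numeral_2_eq_2 sum_distrib_right)
  also have "\<dots> = (\<Prod>j<Suc m. g j False + g j True)"
    using Suc by (simp add: distrib_left)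
  finally show ?case .
qed simp

definition coherent_amp :: "complex \<Rightarrow> bool \<Rightarrow> complex" where
  "coherent_amp z b = (if b then z else 1) / complex_of_real (sqrt (1 + (cmod z)\<^sup>2))"

definition coherent_prod :: "complex \<Rightarrow> nat \<Rightarrow> nat \<Rightarrow> complex" where
  "coherent_prod z m i = (\<Prod>j<m. coherent_amp z (bit i j))"

definition coherent_inner :: "complex \<Rightarrow> complex \<Rightarrow> complex" where
  "coherent_inner z w =
     coherent_amp z False * cnj (coherent_amp w False) + coherent_amp z True * cnj (coherent_amp w True)"

lemma coherent_prod_inner:
  "(\<Sum>i<(2::nat) ^ m. coherent_prod z m i * cnj (coherent_prod w m i)) = coherent_inner z w ^ m"
proof -
  have "(\<Sum>i<(2::nat) ^ m. coherent_prod z m i * cnj (coherent_prod w m i))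
      = (\<Sum>i<(2::nat) ^ m. \<Prod>j<m. (\<lambda>j b. coherent_amp z b * cnj (coherent_amp w b)) j (bit i j))"
    by (simp add: coherent_prod_def cnj_prod prod.distrib)
  also have "\<dots> = (\<Prod>j<m. coherent_inner z w)"
    by (subst sum_prod_bits) (simp add: coherent_inner_def add.commute)
  finally show ?thesis
    by simp
qed

lemma coherent_inner_eq:
  "coherent_inner z w =
     (1 + z * cnj w) / complex_of_real (sqrt (1 + (cmod z)\<^sup>2) * sqrt (1 + (cmod w)\<^sup>2))"
  by (simp add: coherent_inner_def coherent_amp_def add_divide_distrib)

lemma coherent_inner_self: "coherent_inner z z = 1"
proof -
  have pos: "1 + (cmod z)\<^sup>2 > 0"
    by (simp add: add_pos_nonneg)
  have "1 + z * cnj z = complex_of_real (1 + (cmod z)\<^sup>2)"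
    using complex_norm_square[of z] by simp
  then show ?thesis
    using pos by (simp add: coherent_inner_eq del: of_real_add)
qed

lemma cmod_coherent_inner_sq:
  "(cmod (coherent_inner z w))\<^sup>2 = 1 - (cmod (z - w))\<^sup>2 / ((1 + (cmod z)\<^sup>2) * (1 + (cmod w)\<^sup>2))"
proof -
  let ?P = "(1 + (cmod z)\<^sup>2) * (1 + (cmod w)\<^sup>2)"
  have P: "?P > 0"
    by (intro mult_pos_pos) (auto intro: add_pos_nonneg)
  obtain a b c d where "z = Complex a b" "w = Complex c d"
    by (meson complex.exhaust_sel)
  then have "(cmod (1 + z * cnj w))\<^sup>2 = ?P - (cmod (z - w))\<^sup>2"
    unfolding cmod_power2 by (simp add: power2_eq_square algebra_simps)
  moreover have "(cmod (coherent_inner z w))\<^sup>2 = (cmod (1 + z * cnj w))\<^sup>2 / ?P"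
    by (simp add: coherent_inner_eq norm_divide power_divide norm_mult power_mult_distrib)
  ultimately show ?thesis
    using P by (simp add: field_simps)
qed

lemma cmod_coherent_inner_le_1: "cmod (coherent_inner z w) \<le> 1"
proof -
  have "(cmod (coherent_inner z w))\<^sup>2 \<le> 1\<^sup>2"
    unfolding cmod_coherent_inner_sq by (simp add: add_pos_nonneg)
  then show ?thesis
    by (rule power2_le_imp_le) simp
qed

lemma cmod_coherent_inner_power_le:
  "cmod (coherent_inner z w) ^ (2 * k)
     \<le> exp (- real k * (cmod (z - w))\<^sup>2 / ((1 + (cmod z)\<^sup>2) * (1 + (cmod w)\<^sup>2)))"
proof -
  define D where "D = (cmod (z - w))\<^sup>2 / ((1 + (cmod z)\<^sup>2) * (1 + (cmod w)\<^sup>2))"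
  have "cmod (coherent_inner z w) ^ (2 * k) = (1 - D) ^ k"
    by (simp add: power_mult cmod_coherent_inner_sq D_def)
  also have "\<dots> \<le> exp (- D) ^ k"
  proof (rule power_mono)
    show "1 - D \<le> exp (- D)"
      using exp_ge_add_one_self[of "- D"] by simp
    show "0 \<le> 1 - D"
      using cmod_coherent_inner_sq[of z w] zero_le_power2[of "cmod (coherent_inner z w)"]
      unfolding D_def by linarith
  qed
  also have "\<dots> = exp (- real k * D)"
    by (simp add: exp_of_nat_mult[symmetric])
  finally show ?thesis
    by (simp add: D_def)
qed

lemma coherent_prod_perm_index:
  assumes "p permutes {..<N}"
  shows "coherent_prod z N (perm_index p N i) = coherent_prod z N i"
proof -
  have "coherent_prod z N (perm_index p N i) = (\<Prod>j<N. coherent_amp z (bit i (p j)))"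
    unfolding coherent_prod_def by (intro prod.cong refl) (simp add: bit_perm_index_iff)
  also have "\<dots> = coherent_prod z N i"
    using prod.permute[OF assms, of "\<lambda>j. coherent_amp z (bit i j)"] by (simp add: coherent_prod_def)
  finally show ?thesis .
qed

lemma coherent_prod_add:
  assumes "a < 2 ^ k"
  shows "coherent_prod z (k + n) (a + 2 ^ k * b) = coherent_prod z k a * coherent_prod z n b"
  unfolding coherent_prod_def prod_lessThan_add
  using assms by (simp add: bit_add_two_power_mult)

lemma of_real_cmod_sq: "complex_of_real ((cmod z)\<^sup>2) = z * cnj z"
  using complex_norm_square[of z] by simp

lemma cmod_sum_mult_cnj_commute:
  "cmod (\<Sum>b\<in>S. g b * cnj (f b)) = cmod (\<Sum>b\<in>S. f b * cnj (g b))"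
proof -
  have "(\<Sum>b\<in>S. g b * cnj (f b)) = cnj (\<Sum>b\<in>S. f b * cnj (g b))"
    by (simp add: cnj_sum mult.commute)
  then show ?thesis
    by (simp only: complex_mod_cnj)
qed

lemma sum_cmod_sq_sum_expand:
  fixes c :: "'t \<Rightarrow> complex" and q :: "'t \<Rightarrow> 'b \<Rightarrow> complex"
  assumes "finite T" "finite S"
  shows "complex_of_real (\<Sum>b\<in>S. (cmod (\<Sum>t\<in>T. c t * q t b))\<^sup>2)
       = (\<Sum>t\<in>T. \<Sum>t'\<in>T. c t * cnj (c t') * (\<Sum>b\<in>S. q t b * cnj (q t' b)))"
proof -
  have "complex_of_real (\<Sum>b\<in>S. (cmod (\<Sum>t\<in>T. c t * q t b))\<^sup>2)
      = (\<Sum>b\<in>S. (\<Sum>t\<in>T. c t * q t b) * cnj (\<Sum>t\<in>T. c t * q t b))"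
    by (simp only: of_real_sum of_real_cmod_sq)
  also have "\<dots> = (\<Sum>b\<in>S. \<Sum>t\<in>T. \<Sum>t'\<in>T. c t * cnj (c t') * (q t b * cnj (q t' b)))"
    by (simp add: cnj_sum sum_distrib_left sum_distrib_right mult_ac)
      (rule sum.cong[OF refl], rule sum.swap)
  also have "\<dots> = (\<Sum>t\<in>T. \<Sum>t'\<in>T. \<Sum>b\<in>S. c t * cnj (c t') * (q t b * cnj (q t' b)))"
    by (subst sum.swap) (simp add: sum.swap[of _ S])
  finally show ?thesis
    by (simp add: sum_distrib_left)
qed

lemma schur_test:
  fixes c :: "'t \<Rightarrow> complex" and G :: "'t \<Rightarrow> 't \<Rightarrow> complex"
  assumes "finite T"
    and rows: "\<And>t. t \<in> T \<Longrightarrow> (\<Sum>t'\<in>T. cmod (G t t')) \<le> B"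
    and cols: "\<And>t. t \<in> T \<Longrightarrow> (\<Sum>t'\<in>T. cmod (G t' t)) \<le> B"
  shows "cmod (\<Sum>t\<in>T. \<Sum>t'\<in>T. c t * cnj (c t') * G t t') \<le> B * (\<Sum>t\<in>T. (cmod (c t))\<^sup>2)"
proof -
  let ?a = "\<lambda>t. cmod (c t)"
  have "cmod (\<Sum>t\<in>T. \<Sum>t'\<in>T. c t * cnj (c t') * G t t')
      \<le> (\<Sum>t\<in>T. \<Sum>t'\<in>T. ?a t * ?a t' * cmod (G t t'))"
    by (rule order_trans[OF norm_sum sum_mono], rule order_trans[OF norm_sum]) (simp add: norm_mult)
  also have "\<dots> \<le> (\<Sum>t\<in>T. \<Sum>t'\<in>T. ((?a t)\<^sup>2 / 2 + (?a t')\<^sup>2 / 2) * cmod (G t t'))"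
  proof (intro sum_mono mult_right_mono)
    fix t t'
    show "?a t * ?a t' \<le> (?a t)\<^sup>2 / 2 + (?a t')\<^sup>2 / 2"
      using zero_le_power2[of "?a t - ?a t'"] by (simp add: power2_eq_square algebra_simps)
  qed simp
  also have "\<dots> = (\<Sum>t\<in>T. (?a t)\<^sup>2 / 2 * (\<Sum>t'\<in>T. cmod (G t t')))
                 + (\<Sum>t\<in>T. \<Sum>t'\<in>T. (?a t')\<^sup>2 / 2 * cmod (G t t'))"
    by (simp add: distrib_right sum.distrib sum_distrib_left)
  also have "(\<Sum>t\<in>T. \<Sum>t'\<in>T. (?a t')\<^sup>2 / 2 * cmod (G t t'))
           = (\<Sum>t'\<in>T. (?a t')\<^sup>2 / 2 * (\<Sum>t\<in>T. cmod (G t t')))"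
    by (subst sum.swap) (simp add: sum_distrib_left)
  also have "(\<Sum>t\<in>T. (?a t)\<^sup>2 / 2 * (\<Sum>t'\<in>T. cmod (G t t')))
           + (\<Sum>t'\<in>T. (?a t')\<^sup>2 / 2 * (\<Sum>t\<in>T. cmod (G t t')))
           \<le> (\<Sum>t\<in>T. (?a t)\<^sup>2 / 2 * B) + (\<Sum>t'\<in>T. (?a t')\<^sup>2 / 2 * B)"
    by (intro add_mono sum_mono mult_left_mono rows cols) auto
  also have "\<dots> = B * (\<Sum>t\<in>T. (?a t)\<^sup>2)"
    by (simp add: sum_distrib_left algebra_simps flip: sum.distrib)
  finally show ?thesis .
qed

lemma synthesis_bound:
  fixes c :: "'t \<Rightarrow> complex" and q :: "'t \<Rightarrow> 'b \<Rightarrow> complex"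
  assumes fin: "finite T" "finite S"
    and rows: "\<And>t. t \<in> T \<Longrightarrow> (\<Sum>t'\<in>T. cmod (\<Sum>b\<in>S. q t b * cnj (q t' b))) \<le> B"
  shows "(\<Sum>b\<in>S. (cmod (\<Sum>t\<in>T. c t * q t b))\<^sup>2) \<le> B * (\<Sum>t\<in>T. (cmod (c t))\<^sup>2)"
proof -
  have "(\<Sum>b\<in>S. (cmod (\<Sum>t\<in>T. c t * q t b))\<^sup>2)
      = cmod (complex_of_real (\<Sum>b\<in>S. (cmod (\<Sum>t\<in>T. c t * q t b))\<^sup>2))"
    by (subst norm_of_real) (simp add: sum_nonneg)
  also have "\<dots> = cmod (\<Sum>t\<in>T. \<Sum>t'\<in>T. c t * cnj (c t') * (\<Sum>b\<in>S. q t b * cnj (q t' b)))"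
    by (simp only: sum_cmod_sq_sum_expand[OF fin])
  also have "\<dots> \<le> B * (\<Sum>t\<in>T. (cmod (c t))\<^sup>2)"
  proof (rule schur_test[OF fin(1) rows])
    fix t assume "t \<in> T"
    have "(\<Sum>t'\<in>T. cmod (\<Sum>b\<in>S. q t' b * cnj (q t b)))
        = (\<Sum>t'\<in>T. cmod (\<Sum>b\<in>S. q t b * cnj (q t' b)))"
      by (intro sum.cong refl cmod_sum_mult_cnj_commute)
    then show "(\<Sum>t'\<in>T. cmod (\<Sum>b\<in>S. q t' b * cnj (q t b))) \<le> B"
      using rows[OF \<open>t \<in> T\<close>] by simp
  qed
  finally show ?thesis .
qed

text \<open>By duality: \<open>\<Sum>\<^sub>t |A t|\<^sup>2 = \<langle>v, w\<rangle>\<close> for \<open>w = \<Sum>\<^sub>t cnj (A t) p t\<close>,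
  whose norm the synthesis bound controls; AM-GM takes the place of Cauchy-Schwarz.\<close>

lemma analysis_bound:
  fixes v :: "'b \<Rightarrow> complex" and p :: "'t \<Rightarrow> 'b \<Rightarrow> complex"
  assumes fin: "finite T" "finite S" and "B > 0"
    and rows: "\<And>t. t \<in> T \<Longrightarrow> (\<Sum>t'\<in>T. cmod (\<Sum>b\<in>S. p t b * cnj (p t' b))) \<le> B"
  shows "(\<Sum>t\<in>T. (cmod (\<Sum>a\<in>S. cnj (v a) * p t a))\<^sup>2) \<le> B * (\<Sum>a\<in>S. (cmod (v a))\<^sup>2)"
proof -
  define A where "A t = (\<Sum>a\<in>S. cnj (v a) * p t a)" for t
  define w where "w a = (\<Sum>t\<in>T. cnj (A t) * p t a)" for a
  define Sm where "Sm = (\<Sum>t\<in>T. (cmod (A t))\<^sup>2)"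
  define V where "V = (\<Sum>a\<in>S. (cmod (v a))\<^sup>2)"
  have w: "(\<Sum>a\<in>S. (cmod (w a))\<^sup>2) \<le> B * Sm"
    using synthesis_bound[OF fin rows, of "\<lambda>t. cnj (A t)"] unfolding w_def Sm_def by simp
  have "complex_of_real Sm = (\<Sum>t\<in>T. cnj (A t) * A t)"
    unfolding Sm_def by (simp only: of_real_sum of_real_cmod_sq mult.commute)
  also have "\<dots> = (\<Sum>a\<in>S. cnj (v a) * w a)"
    unfolding A_def w_def by (simp add: sum_distrib_left sum_distrib_right mult_ac sum.swap[of _ T])
  finally have Sm: "complex_of_real Sm = (\<Sum>a\<in>S. cnj (v a) * w a)" .
  have "Sm = cmod (complex_of_real Sm)"
    unfolding norm_of_real by (simp add: Sm_def sum_nonneg)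
  also have "\<dots> = cmod (\<Sum>a\<in>S. cnj (v a) * w a)"
    by (simp only: Sm)
  also have "\<dots> \<le> (\<Sum>a\<in>S. cmod (v a) * cmod (w a))"
    by (rule order_trans[OF norm_sum]) (simp add: norm_mult)
  also have "\<dots> \<le> (\<Sum>a\<in>S. (B * (cmod (v a))\<^sup>2 + (cmod (w a))\<^sup>2 / B) / 2)"
  proof (rule sum_mono)
    fix a
    have "2 * B * (cmod (v a) * cmod (w a)) \<le> B * B * (cmod (v a))\<^sup>2 + (cmod (w a))\<^sup>2"
      using zero_le_power2[of "B * cmod (v a) - cmod (w a)"] by (simp add: power2_eq_square algebra_simps)
    then show "cmod (v a) * cmod (w a) \<le> (B * (cmod (v a))\<^sup>2 + (cmod (w a))\<^sup>2 / B) / 2"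
      using \<open>B > 0\<close> by (simp add: field_simps)
  qed
  also have "\<dots> = (B * V + (\<Sum>a\<in>S. (cmod (w a))\<^sup>2) / B) / 2"
    unfolding V_def by (simp add: sum.distrib sum_distrib_left sum_divide_distrib add_divide_distrib)
  also have "\<dots> \<le> (B * V + Sm) / 2"
    using w \<open>B > 0\<close> by (simp add: field_simps)
  finally have "Sm \<le> B * V"
    by simp
  then show ?thesis
    unfolding Sm_def V_def A_def .
qed

lemma sum_power_le_geometric:
  fixes r :: real
  assumes "finite I" "0 \<le> r" "r < 1"
  shows "(\<Sum>i\<in>I. r ^ i) \<le> 1 / (1 - r)"
proof -
  obtain n where "I \<subseteq> {..<n}"
    using assms(1) finite_nat_bounded by blast
  then have "(\<Sum>i\<in>I. r ^ i) \<le> (\<Sum>i<n. r ^ i)"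
    using assms by (intro sum_mono2) auto
  also have "\<dots> = (1 - r ^ n) / (1 - r)"
    using assms by (simp add: sum_gp_strict)
  also have "\<dots> \<le> 1 / (1 - r)"
    using assms by (intro divide_right_mono) auto
  finally show ?thesis .
qed

lemma sum_exp_neg_sq_dist_le:
  fixes x K :: nat
  shows "(\<Sum>x'<K. exp (-12 * (real x - real x')\<^sup>2)) \<le> 7 / 6"
proof -
  define f where "f x' = exp (-12 * (real x - real x')\<^sup>2)" for x'
  define r where "r = exp (-12 :: real)"
  have "1 + 12 \<le> exp (12 :: real)"
    by (rule exp_ge_add_one_self)
  then have r: "0 \<le> r" "r \<le> 1 / 13"
    by (simp_all add: r_def exp_minus field_simps)
  have f_le: "f x' \<le> r ^ d" if "(real x - real x')\<^sup>2 = (real d)\<^sup>2" for x' d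
  proof -
    have "real d \<le> (real d)\<^sup>2"
      by (cases d) (auto simp: power2_eq_square)
    then have "f x' \<le> exp (real d * (-12))"
      using that by (simp add: f_def)
    also have "\<dots> = r ^ d"
      unfolding r_def by (rule exp_of_nat_mult)
    finally show ?thesis .
  qed
  have "(\<Sum>x'\<le>x. f x') \<le> (\<Sum>x'\<le>x. r ^ (x - x'))"
    by (intro sum_mono f_le) (simp add: of_nat_diff)
  also have "\<dots> = (\<Sum>i\<in>(\<lambda>x'. x - x') ` {..x}. r ^ i)"
    by (subst sum.reindex) (auto simp: inj_on_def)
  also have "\<dots> \<le> 1 / (1 - r)"
    using r by (intro sum_power_le_geometric) auto
  finally have left: "(\<Sum>x'\<le>x. f x') \<le> 1 / (1 - r)" .
  have "f x' \<le> r * r ^ (x' - Suc x)" if "x' \<in> {x<..<K}" for x'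
  proof -
    have "f x' \<le> r ^ (x' - x)"
      using that by (intro f_le) (simp add: of_nat_diff power2_commute)
    also have "x' - x = Suc (x' - Suc x)"
      using that by auto
    finally show ?thesis
      by simp
  qed
  then have "(\<Sum>x'\<in>{x<..<K}. f x') \<le> (\<Sum>x'\<in>{x<..<K}. r * r ^ (x' - Suc x))"
    by (rule sum_mono)
  also have "\<dots> = r * (\<Sum>i\<in>(\<lambda>x'. x' - Suc x) ` {x<..<K}. r ^ i)"
    by (subst sum.reindex) (auto simp: inj_on_def sum_distrib_left)
  also have "\<dots> \<le> r * (1 / (1 - r))"
    using r by (intro mult_left_mono sum_power_le_geometric) auto
  finally have right: "(\<Sum>x'\<in>{x<..<K}. f x') \<le> r / (1 - r)"
    by simp
  have "(\<Sum>x'<K. f x') \<le> (\<Sum>x'\<in>{..x} \<union> {x<..<K}. f x')"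
    by (intro sum_mono2) (auto simp: f_def)
  also have "\<dots> = (\<Sum>x'\<le>x. f x') + (\<Sum>x'\<in>{x<..<K}. f x')"
    by (intro sum.union_disjoint) auto
  also have "\<dots> \<le> (1 + r) / (1 - r)"
    using left right by (simp add: add_divide_distrib)
  also have "\<dots> \<le> 7 / 6"
    using r by (subst pos_divide_le_eq) auto
  finally show ?thesis
    by (simp add: f_def)
qed

definition grid :: "nat \<Rightarrow> (nat \<times> nat) set" where
  "grid K = {..<K} \<times> {..<K}"

definition grid_point :: "nat \<Rightarrow> nat \<times> nat \<Rightarrow> complex" where
  "grid_point K t = Complex (real (fst t) / real K) (real (snd t) / real K)"

lemma finite_grid [simp]: "finite (grid K)"
  by (simp add: grid_def)

lemma card_grid: "card (grid K) = K\<^sup>2"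
  by (simp add: grid_def card_cartesian_product power2_eq_square)

lemma cmod_grid_point_sq_le:
  assumes "t \<in> grid K"
  shows "(cmod (grid_point K t))\<^sup>2 \<le> 2"
proof -
  have le1: "real x / real K \<le> 1" if "x < K" for x
    using that by (simp add: divide_le_eq_1)
  have "(real (fst t) / real K)\<^sup>2 + (real (snd t) / real K)\<^sup>2 \<le> 1 + 1"
    using assms le1 by (intro add_mono power_le_one) (auto simp: grid_def)
  then show ?thesis
    by (simp add: grid_point_def cmod_power2)
qed

lemma cmod_grid_point_diff_sq:
  assumes "1 \<le> K"
  shows "(cmod (grid_point K t - grid_point K t'))\<^sup>2
       = ((real (fst t) - real (fst t'))\<^sup>2 + (real (snd t) - real (snd t'))\<^sup>2) / (real K)\<^sup>2"
  using assms by (simp add: grid_point_def cmod_power2 power_divide flip: diff_divide_distrib add_divide_distrib)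

lemma cmod_coherent_inner_grid_power_le:
  assumes K: "1 \<le> K" and m: "216 * K\<^sup>2 \<le> m" and t: "t \<in> grid K" "t' \<in> grid K"
  shows "cmod (coherent_inner (grid_point K t) (grid_point K t')) ^ m
     \<le> exp (-12 * (real (fst t) - real (fst t'))\<^sup>2) * exp (-12 * (real (snd t) - real (snd t'))\<^sup>2)"
proof -
  let ?z = "grid_point K t" and ?w = "grid_point K t'"
  define d2 where "d2 = (real (fst t) - real (fst t'))\<^sup>2 + (real (snd t) - real (snd t'))\<^sup>2"
  define den where "den = (1 + (cmod ?z)\<^sup>2) * (1 + (cmod ?w)\<^sup>2)"
  define k where "k = m div 2"
  have den: "0 < den" "den \<le> 9"
    using mult_mono[of "1 + (cmod ?z)\<^sup>2" 3 "1 + (cmod ?w)\<^sup>2" 3] cmod_grid_point_sq_le[OF t(1)]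
      cmod_grid_point_sq_le[OF t(2)]
    by (auto simp: den_def add_pos_nonneg)
  have zw: "(cmod (?z - ?w))\<^sup>2 = d2 / (real K)\<^sup>2"
    using cmod_grid_point_diff_sq[OF K] by (simp add: d2_def)
  have "108 * K\<^sup>2 \<le> k"
    using m by (simp add: k_def less_eq_div_iff_mult_less_eq)
  then have k: "108 * (real K)\<^sup>2 \<le> real k"
    using of_nat_le_iff[of "108 * K\<^sup>2" k] by simp
  have "12 * d2 = 108 * (real K)\<^sup>2 * (d2 / (real K)\<^sup>2 / 9)"
    using K by (simp add: field_simps)
  also have "\<dots> \<le> real k * ((cmod (?z - ?w))\<^sup>2 / 9)"
    unfolding zw by (intro mult_right_mono k) (simp add: d2_def)
  also have "\<dots> \<le> real k * ((cmod (?z - ?w))\<^sup>2 / den)"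
    using den by (intro mult_left_mono divide_left_mono) auto
  finally have exponent: "12 * d2 \<le> real k * (cmod (?z - ?w))\<^sup>2 / den"
    by simp
  have "cmod (coherent_inner ?z ?w) ^ m \<le> cmod (coherent_inner ?z ?w) ^ (2 * k)"
    by (rule power_decreasing) (auto simp: k_def cmod_coherent_inner_le_1)
  also have "\<dots> \<le> exp (- real k * (cmod (?z - ?w))\<^sup>2 / den)"
    unfolding den_def by (rule cmod_coherent_inner_power_le)
  also have "\<dots> \<le> exp (-12 * d2)"
    using exponent by simp
  also have "\<dots> = exp (-12 * (real (fst t) - real (fst t'))\<^sup>2)
                   * exp (-12 * (real (snd t) - real (snd t'))\<^sup>2)"
    by (simp only: d2_def distrib_left exp_add)
  finally show ?thesis .
qed

lemma grid_gram_row_sum_le: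
  assumes K: "1 \<le> K" and m: "216 * K\<^sup>2 \<le> m" and t: "t \<in> grid K"
  shows "(\<Sum>t'\<in>grid K. cmod (\<Sum>i<(2::nat) ^ m.
           coherent_prod (grid_point K t) m i * cnj (coherent_prod (grid_point K t') m i))) \<le> 49 / 36"
proof -
  obtain x y where xy: "t = (x, y)"
    by fastforce
  have "(\<Sum>t'\<in>grid K. cmod (\<Sum>i<(2::nat) ^ m.
           coherent_prod (grid_point K t) m i * cnj (coherent_prod (grid_point K t') m i)))
      = (\<Sum>t'\<in>grid K. cmod (coherent_inner (grid_point K t) (grid_point K t')) ^ m)"
    by (simp add: coherent_prod_inner norm_power)
  also have "\<dots> \<le> (\<Sum>t'\<in>grid K.
      exp (-12 * (real x - real (fst t'))\<^sup>2) * exp (-12 * (real y - real (snd t'))\<^sup>2))"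
    using cmod_coherent_inner_grid_power_le[OF K m t] by (intro sum_mono) (simp add: xy)
  also have "\<dots> = (\<Sum>x'<K. exp (-12 * (real x - real x')\<^sup>2))
                   * (\<Sum>y'<K. exp (-12 * (real y - real y')\<^sup>2))"
    by (simp add: grid_def sum_product sum.cartesian_product split_def)
  also have "\<dots> \<le> 7 / 6 * (7 / 6)"
    by (intro mult_mono sum_exp_neg_sq_dist_le) (auto intro: sum_nonneg)
  finally show ?thesis
    by simp
qed

definition superposition :: "nat \<Rightarrow> nat \<Rightarrow> nat \<Rightarrow> complex" where
  "superposition N K i = (\<Sum>t\<in>grid K. coherent_prod (grid_point K t) N i)"

definition superposition_norm_sq :: "nat \<Rightarrow> nat \<Rightarrow> real" where
  "superposition_norm_sq N K = (\<Sum>i<(2::nat) ^ N. (cmod (superposition N K i))\<^sup>2)"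

definition sym_state :: "nat \<Rightarrow> nat \<Rightarrow> complex vec" where
  "sym_state N K = vec (2 ^ N)
     (\<lambda>i. superposition N K i / complex_of_real (sqrt (superposition_norm_sq N K)))"

lemma superposition_norm_sq_ge:
  assumes K: "1 \<le> K" and N: "216 * K\<^sup>2 \<le> N"
  shows "23 / 36 * real (K\<^sup>2) \<le> superposition_norm_sq N K"
proof -
  let ?G = "\<lambda>t t'. \<Sum>i<(2::nat) ^ N.
              coherent_prod (grid_point K t) N i * cnj (coherent_prod (grid_point K t') N i)"
  have Z: "complex_of_real (superposition_norm_sq N K) = (\<Sum>t\<in>grid K. \<Sum>t'\<in>grid K. ?G t t')"
    using sum_cmod_sq_sum_expand[of "grid K" "{..<(2::nat) ^ N}" "\<lambda>_. 1"
        "\<lambda>t i. coherent_prod (grid_point K t) N i"]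
    by (simp add: superposition_norm_sq_def superposition_def)
  have row: "23 / 36 \<le> Re (\<Sum>t'\<in>grid K. ?G t t')" if t: "t \<in> grid K" for t
  proof -
    have diag: "?G t t = 1"
      by (simp add: coherent_prod_inner coherent_inner_self)
    have "(\<Sum>t'\<in>grid K. ?G t t') = ?G t t + (\<Sum>t'\<in>grid K - {t}. ?G t t')"
      using t by (simp add: sum.remove)
    moreover have "(\<Sum>t'\<in>grid K. cmod (?G t t')) = cmod (?G t t) + (\<Sum>t'\<in>grid K - {t}. cmod (?G t t'))"
      using t by (simp add: sum.remove)
    moreover have "- Re (\<Sum>t'\<in>grid K - {t}. ?G t t') \<le> (\<Sum>t'\<in>grid K - {t}. cmod (?G t t'))"
      using abs_Re_le_cmod[of "\<Sum>t'\<in>grid K - {t}. ?G t t'"] norm_sum[of "?G t" "grid K - {t}"] by linarith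
    ultimately show ?thesis
      using grid_gram_row_sum_le[OF K N t] diag by simp
  qed
  have "23 / 36 * real (K\<^sup>2) = (\<Sum>t\<in>grid K. 23 / 36)"
    by (simp add: card_grid)
  also have "\<dots> \<le> (\<Sum>t\<in>grid K. Re (\<Sum>t'\<in>grid K. ?G t t'))"
    by (intro sum_mono row)
  also have "\<dots> = superposition_norm_sq N K"
    by (metis Re_complex_of_real Re_sum Z)
  finally show ?thesis .
qed

lemma superposition_norm_sq_pos:
  assumes "1 \<le> K" "216 * K\<^sup>2 \<le> N"
  shows "0 < superposition_norm_sq N K"
proof -
  have "0 < 23 / 36 * real (K\<^sup>2)"
    using assms(1) by simp
  then show ?thesis
    using superposition_norm_sq_ge[OF assms] by linarith
qed

lemma sym_state_symmetric: "sym_state N K \<in> symmetric_subspace N"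
  unfolding symmetric_subspace_def
proof (intro CollectI conjI allI impI)
  show "dim_vec (sym_state N K) = 2 ^ N"
    by (simp add: sym_state_def)
  fix p and i :: nat
  assume "p permutes {..<N}" "i < 2 ^ N"
  then show "sym_state N K $ i = sym_state N K $ perm_index p N i"
    by (simp add: sym_state_def superposition_def perm_index_less coherent_prod_perm_index)
qed

lemma pure_state_sym_state:
  assumes "0 < superposition_norm_sq N K"
  shows "pure_state N (sym_state N K)"
  unfolding pure_state_def
proof
  show "dim_vec (sym_state N K) = 2 ^ N"
    by (simp add: sym_state_def)
  have "(\<Sum>i<2 ^ N. (cmod (sym_state N K $ i))\<^sup>2)
      = (\<Sum>i<2 ^ N. (cmod (superposition N K i))\<^sup>2 / superposition_norm_sq N K)"
    using assms by (intro sum.cong refl) (simp add: sym_state_def norm_divide power_divide)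
  also have "\<dots> = 1"
    using assms by (simp add: superposition_norm_sq_def flip: sum_divide_distrib)
  finally show "(\<Sum>i<2 ^ N. (cmod (sym_state N K $ i))\<^sup>2) = 1" .
qed

lemma sym_state_split_index:
  assumes "k \<le> N" "a < 2 ^ k" "b < 2 ^ (N - k)"
  shows "sym_state N K $ (a + 2 ^ k * b) =
    (\<Sum>t\<in>grid K. coherent_prod (grid_point K t) k a * coherent_prod (grid_point K t) (N - k) b)
      / complex_of_real (sqrt (superposition_norm_sq N K))"
proof -
  have "a + 2 ^ k * b < 2 ^ k * Suc b"
    using assms(2) by simp
  also have "\<dots> \<le> 2 ^ k * 2 ^ (N - k)"
    using assms(3) by (intro mult_le_mono2) simp
  finally have "a + 2 ^ k * b < 2 ^ N"
    using assms(1) by (simp flip: power_add)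
  moreover have "N = k + (N - k)"
    using assms(1) by simp
  ultimately show ?thesis
    using coherent_prod_add[OF assms(2), of _ "N - k" b]
    by (simp add: sym_state_def superposition_def)
qed

definition mat_trace :: "'a :: comm_ring_1 mat \<Rightarrow> 'a" where
  "mat_trace A = (\<Sum>i<dim_row A. A $$ (i, i))"

lemma mat_trace_mult_commute:
  assumes "A \<in> carrier_mat n m" "B \<in> carrier_mat m n"
  shows "mat_trace (A * B) = mat_trace (B * A)"
proof -
  have "mat_trace (A * B) = (\<Sum>i<n. \<Sum>j<m. A $$ (i, j) * B $$ (j, i))"
    using assms by (simp add: mat_trace_def index_mult_mat scalar_prod_def atLeast0LessThan)
  also have "\<dots> = (\<Sum>j<m. \<Sum>i<n. B $$ (j, i) * A $$ (i, j))"
    by (subst sum.swap) (simp add: mult.commute)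
  also have "\<dots> = mat_trace (B * A)"
    using assms by (simp add: mat_trace_def index_mult_mat scalar_prod_def atLeast0LessThan)
  finally show ?thesis .
qed

lemma mat_trace_similar:
  assumes "similar_mat_wit A B P Q"
  shows "mat_trace A = mat_trace B"
proof -
  obtain n where carrier: "A \<in> carrier_mat n n" "B \<in> carrier_mat n n"
      "P \<in> carrier_mat n n" "Q \<in> carrier_mat n n"
    and QP: "Q * P = 1\<^sub>m n" and A: "A = P * B * Q"
    using similar_mat_witD[OF refl assms] by blast
  have "mat_trace A = mat_trace (P * (B * Q))"
    using A carrier by (simp add: assoc_mult_mat)
  also have "\<dots> = mat_trace (B * Q * P)"
    using carrier by (intro mat_trace_mult_commute) auto
  also have "B * Q * P = B"
    using carrier QP by (simp add: assoc_mult_mat)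
  finally show ?thesis .
qed

lemma sum_list_eigenvalues_eq_mat_trace:
  fixes A :: "'a :: conjugatable_ordered_field mat"
  assumes A: "A \<in> carrier_mat n n" and char_poly: "char_poly A = (\<Prod>a\<leftarrow>es. [:- a, 1:])"
  shows "sum_list es = mat_trace A"
proof -
  obtain B P Q where "schur_decomposition A es = (B, P, Q)"
    by (metis prod_cases3)
  with schur_decomposition[OF A char_poly]
  have sim: "similar_mat_wit A B P Q" and diag: "diag_mat B = es"
    by auto
  have "sum_list es = mat_trace B"
    unfolding diag[symmetric] diag_mat_def mat_trace_def
    by (simp add: interv_sum_list_conv_sum_set_nat atLeast0LessThan)
  also have "\<dots> = mat_trace A"
    using mat_trace_similar[OF sim] by simp
  finally show ?thesis .
qed

lemma proots_prod_linear: "proots (\<Prod>a\<leftarrow>as. [:- a, 1:]) = mset (as :: complex list)"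
proof -
  have "proots (\<Prod>p\<leftarrow>map (\<lambda>a. [:- a, 1:]) as. p)
      = sum_list (map proots (map (\<lambda>a. [:- a, 1:]) as))"
    by (rule proots_prod_list) auto
  also have "\<dots> = mset as"
    by (induction as) auto
  finally show ?thesis
    by (simp add: comp_def)
qed

lemma neg_log_le_vn_entropy:
  fixes A :: "complex mat"
  assumes A: "A \<in> carrier_mat n n" and trace: "mat_trace A = 1" and "0 < L"
    and eigenvalues: "\<And>lam. eigenvalue A lam \<Longrightarrow> 0 \<le> Re lam \<and> Re lam \<le> L"
  shows "- log 2 L \<le> vn_entropy A"
proof -
  obtain es where char_poly: "char_poly A = (\<Prod>a\<leftarrow>es. [:- a, 1:])"
    using char_poly_factorized[OF A] by blast
  define h where "h lam = (if Re lam = 0 then 0 else Re lam * log 2 (Re lam))" for lam :: complex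
  have h_le: "h a \<le> Re a * log 2 L" if "a \<in> set es" for a
  proof -
    have "poly (char_poly A) a = 0"
      unfolding char_poly using that by (rule linear_poly_root)
    then have "0 \<le> Re a" "Re a \<le> L"
      using eigenvalues eigenvalue_root_char_poly[OF A] by auto
    then show ?thesis
      using \<open>0 < L\<close> by (cases "Re a = 0") (auto simp: h_def intro!: mult_left_mono log_mono)
  qed
  have "vn_entropy A = - sum_list (map h es)"
    unfolding vn_entropy_def char_poly proots_prod_linear h_def
    by (simp only: mset_map[symmetric] sum_mset_sum_list)
  moreover have "sum_list (map h es) \<le> sum_list (map (\<lambda>a. Re a * log 2 L) es)"
    using h_le by (rule sum_list_mono)
  moreover have "sum_list (map (\<lambda>a. Re a * log 2 L) es) = Re (sum_list es) * log 2 L"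
    by (induction es) (simp_all add: algebra_simps)
  moreover have "sum_list es = 1"
    using sum_list_eigenvalues_eq_mat_trace[OF A char_poly] trace by simp
  ultimately show ?thesis
    by simp
qed

lemma mat_trace_reduced_density:
  assumes "pure_state N psi" "k \<le> N"
  shows "mat_trace (reduced_density N k psi) = 1"
proof -
  have "mat_trace (reduced_density N k psi)
      = (\<Sum>a<2 ^ k. \<Sum>b<2 ^ (N - k). complex_of_real ((cmod (psi $ (a + 2 ^ k * b)))\<^sup>2))"
    by (simp add: mat_trace_def reduced_density_def of_real_cmod_sq del: of_real_power)
  also have "\<dots> = complex_of_real (\<Sum>b<2 ^ (N - k). \<Sum>a<2 ^ k. (cmod (psi $ (a + 2 ^ k * b)))\<^sup>2)"
    by (simp add: of_real_sum sum.swap[of _ "{..<2 ^ k}"])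
  also have "\<dots> = complex_of_real (\<Sum>i<2 ^ k * 2 ^ (N - k). (cmod (psi $ i))\<^sup>2)"
    by (simp only: sum_lessThan_mult)
  also have "(2::nat) ^ k * 2 ^ (N - k) = 2 ^ N"
    using assms(2) by (simp flip: power_add)
  also have "(\<Sum>i<2 ^ N. (cmod (psi $ i))\<^sup>2) = 1"
    using assms(1) by (simp add: pure_state_def)
  finally show ?thesis
    by simp
qed

lemma eigenvector_norm_sq_pos:
  assumes "A \<in> carrier_mat d d" "eigenvector A v lam"
  shows "0 < (\<Sum>a<d. (cmod (v $ a))\<^sup>2)"
proof -
  have "dim_vec v = d" "v \<noteq> 0\<^sub>v d"
    using assms by (auto simp: eigenvector_def)
  then obtain a where "a < d" "v $ a \<noteq> 0"
    by (metis eq_vecI index_zero_vec(1,2))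
  then show ?thesis
    by (intro sum_pos2[of _ a]) auto
qed

lemma eigenvalue_gram_eq:
  fixes A :: "complex mat" and f :: "nat \<Rightarrow> 'b \<Rightarrow> complex"
  assumes "finite S" and A: "A \<in> carrier_mat d d"
    and entries: "\<And>a a'. a < d \<Longrightarrow> a' < d \<Longrightarrow>
      A $$ (a, a') = (\<Sum>b\<in>S. f a b * cnj (f a' b))"
    and ev: "eigenvector A v lam"
  shows "lam = complex_of_real
    ((\<Sum>b\<in>S. (cmod (\<Sum>a<d. cnj (v $ a) * f a b))\<^sup>2) / (\<Sum>a<d. (cmod (v $ a))\<^sup>2))"
proof -
  have v: "dim_vec v = d" "A *\<^sub>v v = lam \<cdot>\<^sub>v v"
    using ev A by (auto simp: eigenvector_def)
  define V where "V = (\<Sum>a<d. (cmod (v $ a))\<^sup>2)"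
  define W where "W = (\<Sum>b\<in>S. (cmod (\<Sum>a<d. cnj (v $ a) * f a b))\<^sup>2)"
  have "0 < V"
    unfolding V_def using A ev by (rule eigenvector_norm_sq_pos)
  have "(\<Sum>a<d. cnj (v $ a) * (A *\<^sub>v v) $ a) = (\<Sum>a<d. lam * complex_of_real ((cmod (v $ a))\<^sup>2))"
    using v by (intro sum.cong refl) (simp add: of_real_cmod_sq mult_ac del: of_real_power)
  also have "\<dots> = lam * complex_of_real V"
    by (simp add: V_def of_real_sum sum_distrib_left)
  finally have quotient: "(\<Sum>a<d. cnj (v $ a) * (A *\<^sub>v v) $ a) = lam * complex_of_real V" .
  have "(\<Sum>a<d. cnj (v $ a) * (A *\<^sub>v v) $ a)
      = (\<Sum>a<d. \<Sum>a'<d. cnj (v $ a) * cnj (cnj (v $ a')) * (\<Sum>b\<in>S. f a b * cnj (f a' b)))"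
  proof (intro sum.cong refl)
    fix a assume "a \<in> {..<d}"
    then have "(A *\<^sub>v v) $ a = (\<Sum>a'<d. (\<Sum>b\<in>S. f a b * cnj (f a' b)) * v $ a')"
      using A v(1) by (simp add: scalar_prod_def atLeast0LessThan entries)
    then show "cnj (v $ a) * (A *\<^sub>v v) $ a
        = (\<Sum>a'<d. cnj (v $ a) * cnj (cnj (v $ a')) * (\<Sum>b\<in>S. f a b * cnj (f a' b)))"
      by (simp add: sum_distrib_left mult_ac)
  qed
  also have "\<dots> = complex_of_real W"
    unfolding W_def using \<open>finite S\<close> by (intro sum_cmod_sq_sum_expand[symmetric]) auto
  finally have "lam * complex_of_real V = complex_of_real W"
    by (simp only: quotient)
  then show ?thesis
    using \<open>0 < V\<close> unfolding V_def[symmetric] W_def[symmetric] by (simp add: field_simps)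
qed

lemma contraction_sym_state_le:
  fixes v :: "nat \<Rightarrow> complex"
  assumes K: "1 \<le> K" and k: "216 * K\<^sup>2 \<le> k" "216 * K\<^sup>2 \<le> N - k"
  shows "(\<Sum>b<2 ^ (N - k). (cmod (\<Sum>a<2 ^ k. cnj (v a) * sym_state N K $ (a + 2 ^ k * b)))\<^sup>2)
    \<le> (49 / 36)\<^sup>2 / superposition_norm_sq N K * (\<Sum>a<2 ^ k. (cmod (v a))\<^sup>2)"
proof -
  define Z where "Z = superposition_norm_sq N K"
  define A where "A t = (\<Sum>a<2 ^ k. cnj (v a) * coherent_prod (grid_point K t) k a)" for t
  have "1 \<le> K\<^sup>2"
    using K by simp
  then have "k \<le> N" "216 * K\<^sup>2 \<le> N"
    using k by linarith+
  have "0 < Z"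
    using superposition_norm_sq_pos[OF K \<open>216 * K\<^sup>2 \<le> N\<close>] unfolding Z_def .
  have "(\<Sum>a<2 ^ k. cnj (v a) * sym_state N K $ (a + 2 ^ k * b))
      = (\<Sum>t\<in>grid K. A t / complex_of_real (sqrt Z) * coherent_prod (grid_point K t) (N - k) b)"
    if "b < 2 ^ (N - k)" for b
  proof -
    have "(\<Sum>a<2 ^ k. cnj (v a) * sym_state N K $ (a + 2 ^ k * b))
        = (\<Sum>a<2 ^ k. \<Sum>t\<in>grid K. cnj (v a) * coherent_prod (grid_point K t) k a
            * coherent_prod (grid_point K t) (N - k) b / complex_of_real (sqrt Z))"
      unfolding Z_def using that \<open>k \<le> N\<close>
      by (intro sum.cong refl) (simp add: sym_state_split_index sum_distrib_left sum_divide_distrib mult.assoc)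
    then show ?thesis
      unfolding A_def by (simp add: sum.swap[of _ "grid K"] sum_distrib_right sum_divide_distrib)
  qed
  then have "(\<Sum>b<2 ^ (N - k). (cmod (\<Sum>a<2 ^ k. cnj (v a) * sym_state N K $ (a + 2 ^ k * b)))\<^sup>2)
      = (\<Sum>b<2 ^ (N - k). (cmod (\<Sum>t\<in>grid K.
           A t / complex_of_real (sqrt Z) * coherent_prod (grid_point K t) (N - k) b))\<^sup>2)"
    by (intro sum.cong refl) simp
  also have "\<dots> \<le> 49 / 36 * (\<Sum>t\<in>grid K. (cmod (A t / complex_of_real (sqrt Z)))\<^sup>2)"
    by (rule synthesis_bound[OF finite_grid finite_lessThan grid_gram_row_sum_le[OF K k(2)]])
  also have "(\<Sum>t\<in>grid K. (cmod (A t / complex_of_real (sqrt Z)))\<^sup>2)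
           = (\<Sum>t\<in>grid K. (cmod (A t))\<^sup>2) / Z"
    using \<open>0 < Z\<close> by (simp add: norm_divide power_divide sum_divide_distrib)
  also have "(\<Sum>t\<in>grid K. (cmod (A t))\<^sup>2) \<le> 49 / 36 * (\<Sum>a<2 ^ k. (cmod (v a))\<^sup>2)"
    unfolding A_def
    by (rule analysis_bound[OF finite_grid finite_lessThan _ grid_gram_row_sum_le[OF K k(1)]]) simp
  finally show ?thesis
    using \<open>0 < Z\<close> by (simp add: Z_def divide_right_mono field_simps power2_eq_square)
qed

lemma reduced_density_sym_state_eigenvalue_le:
  assumes K: "1 \<le> K" and k: "216 * K\<^sup>2 \<le> k" "216 * K\<^sup>2 \<le> N - k"
    and "eigenvalue (reduced_density N k (sym_state N K)) lam"
  shows "0 \<le> Re lam \<and> Re lam \<le> (49 / 36)\<^sup>2 / superposition_norm_sq N K"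
proof -
  define \<rho> where "\<rho> = reduced_density N k (sym_state N K)"
  have carrier: "\<rho> \<in> carrier_mat (2 ^ k) (2 ^ k)"
    by (simp add: \<rho>_def reduced_density_def)
  obtain v where v: "eigenvector \<rho> v lam"
    using assms(4) by (auto simp: eigenvalue_def \<rho>_def)
  define V where "V = (\<Sum>a<2 ^ k. (cmod (v $ a))\<^sup>2)"
  define W where "W = (\<Sum>b<2 ^ (N - k).
      (cmod (\<Sum>a<2 ^ k. cnj (v $ a) * sym_state N K $ (a + 2 ^ k * b)))\<^sup>2)"
  have lam: "lam = complex_of_real (W / V)"
    unfolding W_def V_def
    by (rule eigenvalue_gram_eq[OF finite_lessThan carrier _ v]) (simp add: \<rho>_def reduced_density_def)
  have "0 < V"
    unfolding V_def using carrier v by (rule eigenvector_norm_sq_pos)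
  moreover have "W \<le> (49 / 36)\<^sup>2 / superposition_norm_sq N K * V"
    unfolding W_def V_def using K k by (rule contraction_sym_state_le)
  ultimately show ?thesis
    by (simp add: lam W_def sum_nonneg pos_divide_le_eq)
qed

lemma ent_entropy_sym_state_ge:
  assumes K: "1 \<le> K" and k: "216 * K\<^sup>2 \<le> k" "216 * K\<^sup>2 \<le> N - k"
  shows "log 2 (superposition_norm_sq N K / (49 / 36)\<^sup>2) \<le> ent_entropy N k (sym_state N K)"
proof -
  define Z where "Z = superposition_norm_sq N K"
  have "1 \<le> K\<^sup>2"
    using K by simp
  then have "k \<le> N" "216 * K\<^sup>2 \<le> N"
    using k by linarith+
  have "0 < Z"
    using superposition_norm_sq_pos[OF K \<open>216 * K\<^sup>2 \<le> N\<close>] unfolding Z_def .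
  have "- log 2 ((49 / 36)\<^sup>2 / Z) \<le> vn_entropy (reduced_density N k (sym_state N K))"
  proof (rule neg_log_le_vn_entropy)
    show "reduced_density N k (sym_state N K) \<in> carrier_mat (2 ^ k) (2 ^ k)"
      by (simp add: reduced_density_def)
    show "mat_trace (reduced_density N k (sym_state N K)) = 1"
      using pure_state_sym_state \<open>0 < Z\<close> \<open>k \<le> N\<close> unfolding Z_def
      by (intro mat_trace_reduced_density)
  qed (use \<open>0 < Z\<close> reduced_density_sym_state_eigenvalue_le[OF K k] in \<open>auto simp: Z_def\<close>)
  then show ?thesis
    using \<open>0 < Z\<close> by (simp add: ent_entropy_def Z_def log_divide_pos)
qed

lemma floor_sqrt_grid_size:
  fixes k :: nat
  assumes "216 \<le> k"
  defines "K \<equiv> floor_sqrt (k div 216)"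
  shows "1 \<le> K" "216 * K\<^sup>2 \<le> k" "k < 864 * K\<^sup>2"
proof -
  define q where "q = k div 216"
  have "1 \<le> q"
    using assms by (simp add: q_def)
  then show "1 \<le> K"
    by (simp add: K_def q_def Suc_le_eq)
  have "K\<^sup>2 \<le> q"
    by (simp add: K_def q_def)
  then show "216 * K\<^sup>2 \<le> k"
    unfolding q_def by linarith
  have "k = 216 * q + k mod 216" "k mod 216 < 216"
    by (simp_all add: q_def)
  then have "k < 216 * q + 216"
    by linarith
  also have "\<dots> = 216 * Suc q"
    by simp
  also have "Suc q \<le> (Suc K)\<^sup>2"
    using Suc_floor_sqrt_power2_gt[of q] by (simp add: K_def q_def)
  also have "(Suc K)\<^sup>2 \<le> 4 * K\<^sup>2"
  proof -
    have "K \<le> K * K" "1 \<le> K * K"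
      using \<open>1 \<le> K\<close> by (simp_all add: le_square)
    moreover have "(Suc K)\<^sup>2 = K * K + 2 * K + 1" "4 * K\<^sup>2 = 4 * (K * K)"
      by (simp_all add: power2_eq_square)
    ultimately show ?thesis
      by linarith
  qed
  finally show "k < 864 * K\<^sup>2"
    by simp
qed

lemma log_gap_lt_12:
  fixes x R Z :: real
  assumes "0 < x" "0 < R" "x \<le> 864 * R" "23 / 36 * R \<le> Z"
  shows "log 2 x - log 2 (Z / (49 / 36)\<^sup>2) < 12"
proof -
  define c :: real where "c = 23 / 36 / (49 / 36)\<^sup>2"
  have "log 2 x \<le> log 2 (864 * R)"
    using assms by (intro log_mono) auto
  moreover have "log 2 (c * R) \<le> log 2 (Z / (49 / 36)\<^sup>2)"
    using assms by (intro log_mono) (auto simp: c_def field_simps)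
  moreover have "log 2 (864 * R) - log 2 (c * R) = log 2 (864 / c)"
    using assms by (simp add: c_def log_divide_pos[symmetric])
  moreover have "log 2 (864 / c) < 12"
    by (subst log_less_iff) (auto simp: c_def powr_realpow power2_eq_square)
  ultimately show ?thesis
    by linarith
qed

theorem mainTheorem1:
  shows "\<exists>\<delta>::real. \<delta> > 0 \<and> (\<exists>Nstar::real. Nstar > 0 \<and>
    (\<forall>N::nat. real N > Nstar \<longrightarrow>
      (\<exists>psi. pure_state N psi \<and> psi \<in> symmetric_subspace N \<and>
         log 2 (real (N div 2) + 1) - ent_entropy N (N div 2) psi < \<delta>)))"
proof (intro exI conjI allI impI)
  show "(12::real) > 0" "(431::real) > 0"
    by simp_all
  fix N :: nat
  assume "real N > 431"
  then have "216 \<le> N div 2"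
    by simp
  define K where "K = floor_sqrt (N div 2 div 216)"
  note K = floor_sqrt_grid_size[OF \<open>216 \<le> N div 2\<close>, folded K_def]
  have halves: "216 * K\<^sup>2 \<le> N - N div 2" "216 * K\<^sup>2 \<le> N"
    using K(2) by linarith+
  define Z where "Z = superposition_norm_sq N K"
  have "23 / 36 * real (K\<^sup>2) \<le> Z"
    unfolding Z_def using K(1) halves(2) by (rule superposition_norm_sq_ge)
  moreover have "real (N div 2) + 1 \<le> 864 * real (K\<^sup>2)"
    using K(3) by linarith
  ultimately have "log 2 (real (N div 2) + 1) - log 2 (Z / (49 / 36)\<^sup>2) < 12"
    using K(1) by (intro log_gap_lt_12) auto
  moreover have "log 2 (Z / (49 / 36)\<^sup>2) \<le> ent_entropy N (N div 2) (sym_state N K)"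
    unfolding Z_def using K(1,2) halves(1) by (rule ent_entropy_sym_state_ge)
  ultimately show "log 2 (real (N div 2) + 1) - ent_entropy N (N div 2) (sym_state N K) < 12"
    by linarith
  show "pure_state N (sym_state N K)"
    using K(1) halves(2) by (intro pure_state_sym_state superposition_norm_sq_pos)
  show "sym_state N K \<in> symmetric_subspace N"
    by (rule sym_state_symmetric)
qed

end
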